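(* In the setting described in the context, assume $3$ divides $q^2+q+1$, let $d=3$ and $t=\frac13(q^2+q+1)$. Then $w_u\le2$ for every $u$. Moreover, for $j=0,1,2$, the number $v_j$ of indices $u\in\{0,\dots,t-1\}$ with $w_u=j$ is $v_0=\frac13(q^2-2q+1)$, $v_1=q-1$, $v_2=1$.
   Context: Let $q=p^h$ with $p$ prime, $h\ge1$. Let $\alpha$ be a primitive element of $\mathbb{F}_{q^3}$; the points of $PG(2,q)$ are the 1-dimensional $\mathbb{F}_q$-subspaces of $\mathbb{F}_{q^3}$, and $P_i$ denotes the point represented by $\alpha^i$, so $PG(2,q)=\{P_0,\dots,P_{q^2+q}\}$. Let $\tau:P_i\mapsto P_{ip\bmod(q^2+q+1)}$ (a collineation) and let $\ell_0$ be a line of $PG(2,q)$ fixed by $\tau$. For a positive divisor $t$ of $q^2+q+1$ and $i=0,\dots,t-1$ let $O_i=\{P_u:u\equiv i\pmod t\}$, and for $u=0,\dots,t-1$ let $w_u=|\ell_0\cap O_u|$. *)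

theory Defs
  imports "HOL-Computational_Algebra.Primes"
begin

text \<open>The field F_{q^3} is a finite field type 'a with q^3 elements; its subfield
F_q is the set of fixed points of x \<mapsto> x^q.\<close>

definition subF :: "nat \<Rightarrow> 'a::field set" where
  "subF q = {x. x ^ q = x}"

definition primitive_elem :: "'a::field \<Rightarrow> bool" where
  "primitive_elem \<alpha> \<longleftrightarrow> (\<forall>x::'a. x \<noteq> 0 \<longrightarrow> (\<exists>i::nat. x = \<alpha> ^ i))"

definition pg_point :: "nat \<Rightarrow> 'a::field \<Rightarrow> nat \<Rightarrow> 'a set" where
  "pg_point q \<alpha> i = {c * \<alpha> ^ i | c. c \<in> subF q}"

definition pg_line :: "nat \<Rightarrow> 'a::field set \<Rightarrow> bool" where
  "pg_line q L \<longleftrightarrow> (\<exists>x y. L = {a * x + b * y | a b. a \<in> subF q \<and> b \<in> subF q} \<and>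
      (\<forall>a b. a \<in> subF q \<longrightarrow> b \<in> subF q \<longrightarrow> a * x + b * y = 0 \<longrightarrow> a = 0 \<and> b = 0))"

definition points_on :: "nat \<Rightarrow> 'a::field \<Rightarrow> 'a set \<Rightarrow> 'a set set" where
  "points_on q \<alpha> L = {pg_point q \<alpha> i | i. i < q^2 + q + 1 \<and> pg_point q \<alpha> i \<subseteq> L}"

text \<open>The collineation tau: P_i \<mapsto> P_{ip mod (q^2+q+1)}; L is fixed by tau iff
tau maps the point set of L onto itself.\<close>
definition tau_fixed :: "nat \<Rightarrow> nat \<Rightarrow> 'a::field \<Rightarrow> 'a set \<Rightarrow> bool" where
  "tau_fixed p q \<alpha> L \<longleftrightarrow>
     {pg_point q \<alpha> ((i * p) mod (q^2 + q + 1)) | i. i < q^2 + q + 1 \<and> pg_point q \<alpha> i \<subseteq> L}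
     = points_on q \<alpha> L"

definition orbit_weight :: "nat \<Rightarrow> 'a::field \<Rightarrow> 'a set \<Rightarrow> nat \<Rightarrow> nat \<Rightarrow> nat" where
  "orbit_weight q \<alpha> L t u =
     card {pg_point q \<alpha> v | v. v < q^2 + q + 1 \<and> v mod t = u mod t \<and> pg_point q \<alpha> v \<subseteq> L}"

end

theory Submission
  imports Defs "HOL-Number_Theory.Residues"
begin

text \<open>Write \<open>\<beta> = \<alpha>\<^sup>t\<close>. Multiplication by \<open>\<beta>\<close> is \<open>\<bbbF>\<^sub>q\<close>-linear and maps \<open>P\<^sub>v\<close> to \<open>P\<^sub>v\<^sub>+\<^sub>t\<close>, so the
  classes \<open>O\<^sub>u = {P\<^sub>u, P\<^sub>u\<^sub>+\<^sub>t, P\<^sub>u\<^sub>+\<^sub>2\<^sub>t}\<close> are its orbits on points. As \<open>\<beta> \<notin> \<bbbF>\<^sub>q\<close> and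
  \<open>q \<equiv> 1 (mod 3)\<close>, the conjugates \<open>\<beta>, \<beta>\<^sup>q, \<beta>\<^sup>q\<^sup>2\<close> are distinct, so \<open>1, \<beta>, \<beta>\<^sup>2\<close> are independent
  over \<open>\<bbbF>\<^sub>q\<close>. Hence no line contains a whole orbit (\<open>w\<^sub>u \<le> 2\<close>) and no line \<open>L\<close> is
  \<open>\<beta>\<close>-invariant, so \<open>L\<close> and \<open>\<beta>\<^sup>-\<^sup>1L\<close> meet in exactly one point \<open>P\<^sub>v\<close>: the unique \<open>v\<close> with
  \<open>P\<^sub>v, P\<^sub>v\<^sub>+\<^sub>t \<in> L\<close>. An orbit meeting \<open>L\<close> in two points contains exactly one such \<open>v\<close>,
  so exactly one \<open>w\<^sub>u\<close> equals 2; then \<open>\<Sum> w\<^sub>u = q + 1\<close> and \<open>\<Sum> 1 = t\<close> give the other counts.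
  The count holds for every line.\<close>

section \<open>Finite fields\<close>

lemma nonzero_power_card_minus_one:
  fixes x :: "'a::{field,finite}"
  assumes "x \<noteq> 0"
  shows "x ^ (card (UNIV::'a set) - 1) = 1"
proof -
  have "(\<Prod>y\<in>UNIV-{0}. x * y) = x ^ card (UNIV - {0::'a}) * \<Prod>(UNIV-{0::'a})"
    by (simp add: prod.distrib)
  moreover have "(\<Prod>y\<in>UNIV-{0}. x * y) = (\<Prod>y\<in>UNIV-{0::'a}. y)"
    by (rule prod.reindex_bij_witness[of _ "\<lambda>y. y / x" "\<lambda>y. x * y"]) (use assms in auto)
  moreover have "\<Prod>(UNIV-{0::'a}) \<noteq> 0"
    by (simp add: prod_zero_iff)
  ultimately show ?thesis
    by (simp add: card_Diff_singleton)
qed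

lemma power_mod_order:
  fixes x :: "'a::monoid_mult"
  assumes "x ^ n = 1"
  shows "x ^ i = x ^ (i mod n)"
proof -
  have "x ^ i = x ^ (n * (i div n) + i mod n)"
    by simp
  also have "\<dots> = x ^ (i mod n)"
    by (simp only: power_add power_mult assms power_one mult_1)
  finally show ?thesis .
qed

lemma primitive_elem_power_eq_iff:
  fixes \<alpha> :: "'a::{field,finite}"
  assumes "primitive_elem \<alpha>" and "\<alpha> \<noteq> 0"
  shows "\<alpha> ^ i = \<alpha> ^ j \<longleftrightarrow> i mod (card (UNIV::'a set) - 1) = j mod (card (UNIV::'a set) - 1)"
proof -
  let ?n = "card (UNIV::'a set) - 1"
  have period: "\<alpha> ^ k = \<alpha> ^ (k mod ?n)" for k
    using power_mod_order nonzero_power_card_minus_one assms(2) by blast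
  have "card {0, 1::'a} \<le> card (UNIV::'a set)"
    by (rule card_mono) auto
  hence "?n > 0"
    by simp
  have onto: "(\<lambda>k. \<alpha> ^ k) ` {..<?n} = UNIV - {0}"
  proof
    show "UNIV - {0} \<subseteq> (\<lambda>k. \<alpha> ^ k) ` {..<?n}"
    proof
      fix x :: 'a
      assume "x \<in> UNIV - {0}"
      then obtain k where "x = \<alpha> ^ k"
        using assms(1) unfolding primitive_elem_def by blast
      thus "x \<in> (\<lambda>k. \<alpha> ^ k) ` {..<?n}"
        using period[of k] \<open>?n > 0\<close> by auto
    qed
  qed (use assms(2) in auto)
  have "card ((\<lambda>k. \<alpha> ^ k) ` {..<?n}) = card {..<?n}"
    unfolding onto by (simp add: card_Diff_singleton)
  hence "inj_on (\<lambda>k. \<alpha> ^ k) {..<?n}"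
    by (rule eq_card_imp_inj_on[rotated]) simp
  hence "\<alpha> ^ (i mod ?n) = \<alpha> ^ (j mod ?n) \<longleftrightarrow> i mod ?n = j mod ?n"
    using \<open>?n > 0\<close> unfolding inj_on_def by auto
  thus ?thesis
    using period by metis
qed

lemma monic_quadratic_at_most_two_roots:
  fixes r1 r2 r3 A B :: "'a::field"
  assumes "r1^2 = A * r1 + B" "r2^2 = A * r2 + B" "r3^2 = A * r3 + B"
    and "r1 \<noteq> r2" "r1 \<noteq> r3"
  shows "r2 = r3"
proof -
  have "(r1 - r2) * (r1 + r2 - A) = 0" "(r1 - r3) * (r1 + r3 - A) = 0"
    using assms(1-3) by (simp_all add: algebra_simps power2_eq_square)
  hence "r1 + r2 = A" "r1 + r3 = A"
    using assms(4,5) by simp_all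
  thus ?thesis
    by (metis add_left_cancel)
qed

lemma finite_field_power_add_char_power:
  fixes x y :: "'a::{field,finite}"
  assumes "prime p" "card (UNIV :: 'a set) = p ^ k" "k > 0" "q = p ^ h"
  shows "(x + y) ^ q = x ^ q + y ^ q"
proof -
  have "prime CHAR('a)"
    by (intro prime_CHAR_semidom finite_imp_CHAR_pos) simp
  moreover have "CHAR('a) dvd p ^ k"
    using CHAR_dvd_CARD[where 'a = 'a] assms(2) by simp
  ultimately have "CHAR('a) = p"
    using assms(1) prime_dvd_power primes_dvd_imp_eq by blast
  thus ?thesis
    using \<open>prime CHAR('a)\<close> assms(4) by (intro freshmans_dream') simp_all
qed

section \<open>Residue classes modulo \<open>t\<close> below \<open>3 t\<close>\<close>

lemma card_eq_sum_card_residue_classes: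
  fixes S :: "nat set"
  assumes "finite S" and "t > 0"
  shows "(\<Sum>u<t. card {v\<in>S. v mod t = u}) = card S"
proof -
  have "(\<lambda>v. v mod t) ` S \<subseteq> {..<t}"
    using assms(2) by auto
  thus ?thesis
    using sum.group[of S "{..<t}" "\<lambda>v. v mod t" "\<lambda>_. 1::nat"] assms(1) by simp
qed

lemma residue_class_below_triple:
  fixes t u :: nat
  assumes "u < t"
  shows "{v. v < 3 * t \<and> v mod t = u} = {u, u + t, u + 2 * t}"
proof
  show "{v. v < 3 * t \<and> v mod t = u} \<subseteq> {u, u + t, u + 2 * t}"
  proof
    fix v
    assume "v \<in> {v. v < 3 * t \<and> v mod t = u}"
    hence v: "v < 3 * t" "v = t * (v div t) + u"
      by (auto simp: mult_div_mod_eq)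
    hence "v div t < 3"
      by (metis add_lessD1 mult.commute mult_less_cancel2)
    thus "v \<in> {u, u + t, u + 2 * t}"
      using v by (auto simp: less_Suc_eq numeral_3_eq_3)
  qed
qed (use assms in auto)

lemma card_shift_pairs_in_residue_class:
  fixes t u :: nat
  assumes "S \<subseteq> {..<3 * t}" and "u < t" and "\<not> {u, u + t, u + 2 * t} \<subseteq> S"
  shows "card {v\<in>S. (v + t) mod (3 * t) \<in> S \<and> v mod t = u}
           = of_bool (card {v\<in>S. v mod t = u} = 2)"
proof -
  have shift: "(u + t) mod (3 * t) = u + t" "(u + t + t) mod (3 * t) = u + 2 * t"
    "(u + 2 * t + t) mod (3 * t) = u"
    using assms(2) by (simp_all add: mod_if)
  have residue_class: "{v\<in>S. v mod t = u} = {u, u + t, u + 2 * t} \<inter> S"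
    using residue_class_below_triple[OF assms(2)] assms(1) by blast
  also have "\<dots> = (if u \<in> S then {u} else {}) \<union> (if u + t \<in> S then {u + t} else {})
      \<union> (if u + 2 * t \<in> S then {u + 2 * t} else {})"
    by auto
  finally have members: "{v\<in>S. v mod t = u} = \<dots>" .
  have "{v\<in>S. (v + t) mod (3 * t) \<in> S \<and> v mod t = u}
      = {v\<in>{u, u + t, u + 2 * t} \<inter> S. (v + t) mod (3 * t) \<in> S}"
    using residue_class by blast
  also have "\<dots> = (if u \<in> S \<and> (u + t) mod (3 * t) \<in> S then {u} else {})
      \<union> (if u + t \<in> S \<and> (u + t + t) mod (3 * t) \<in> S then {u + t} else {})
      \<union> (if u + 2 * t \<in> S \<and> (u + 2 * t + t) mod (3 * t) \<in> S then {u + 2 * t} else {})"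
    by auto
  finally have pairs: "{v\<in>S. (v + t) mod (3 * t) \<in> S \<and> v mod t = u}
      = (if u \<in> S \<and> u + t \<in> S then {u} else {})
      \<union> (if u + t \<in> S \<and> u + 2 * t \<in> S then {u + t} else {})
      \<union> (if u + 2 * t \<in> S \<and> u \<in> S then {u + 2 * t} else {})"
    unfolding shift .
  show ?thesis
    unfolding pairs members using assms(2,3)
    by (cases "u \<in> S"; cases "u + t \<in> S"; cases "u + 2 * t \<in> S") simp_all
qed

lemma card_residue_class_le_two:
  fixes t u :: nat
  assumes "S \<subseteq> {..<3 * t}" and "u < t" and "\<not> {u, u + t, u + 2 * t} \<subseteq> S"
  shows "card {v\<in>S. v mod t = u} \<le> 2"
proof -
  have "card {v\<in>S. v mod t = u} = card ({u, u + t, u + 2 * t} \<inter> S)"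
    using residue_class_below_triple[OF assms(2)] assms(1) by (intro arg_cong[where f = card]) blast
  also have "\<dots> < card {u, u + t, u + 2 * t}"
    by (rule psubset_card_mono) (use assms(3) in auto)
  also have "\<dots> \<le> 3"
    by (simp add: card_insert_if)
  finally show ?thesis
    by simp
qed

lemma residue_class_counts:
  fixes t q :: nat and S :: "nat set"
  defines "w u \<equiv> card {v\<in>S. v mod t = u}"
  assumes S_sub: "S \<subseteq> {..<3 * t}" and card_S: "card S = q + 1"
    and card_pairs: "card {v\<in>S. (v + t) mod (3 * t) \<in> S} = 1"
    and no_full_class: "\<And>u. u < t \<Longrightarrow> \<not> {u, u + t, u + 2 * t} \<subseteq> S"
  shows "\<forall>u<t. w u \<le> 2"
    and "card {u. u < t \<and> w u = 2} = 1"
    and "card {u. u < t \<and> w u = 1} = q - 1"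
    and "card {u. u < t \<and> w u = 0} + q = t"
proof -
  have fin: "finite S"
    using S_sub finite_subset by blast
  have "t > 0"
    using S_sub card_S by (cases "t = 0") auto
  show w_le: "\<forall>u<t. w u \<le> 2"
    unfolding w_def using S_sub no_full_class by (intro allI impI card_residue_class_le_two) auto
  have count: "card {u. u < t \<and> P u} = (\<Sum>u<t. of_bool (P u))" for P
    by (simp add: Int_def)
  have "card {v\<in>S. (v + t) mod (3 * t) \<in> S}
      = (\<Sum>u<t. card {v\<in>S. (v + t) mod (3 * t) \<in> S \<and> v mod t = u})"
    using card_eq_sum_card_residue_classes[of "{v\<in>S. (v + t) mod (3 * t) \<in> S}" t] fin \<open>t > 0\<close>
    by (simp add: conj_assoc)
  also have "\<dots> = (\<Sum>u<t. of_bool (w u = 2))"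
    unfolding w_def using S_sub no_full_class by (intro sum.cong refl card_shift_pairs_in_residue_class) auto
  finally show two: "card {u. u < t \<and> w u = 2} = 1"
    using card_pairs count by simp
  have "q + 1 = (\<Sum>u<t. w u)"
    unfolding w_def card_S[symmetric] using card_eq_sum_card_residue_classes fin \<open>t > 0\<close> by simp
  also have "\<dots> = (\<Sum>u<t. of_bool (w u = 1) + 2 * of_bool (w u = 2))"
    using w_le by (intro sum.cong refl) (auto simp: le_Suc_eq numeral_2_eq_2)
  also have "\<dots> = card {u. u < t \<and> w u = 1} + 2"
    using two by (simp add: count sum.distrib flip: sum_distrib_left)
  finally have weight_sum: "q + 1 = card {u. u < t \<and> w u = 1} + 2" .
  thus one: "card {u. u < t \<and> w u = 1} = q - 1"
    by simp
  have "t = (\<Sum>u<t. 1::nat)"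
    by simp
  also have "\<dots> = (\<Sum>u<t. of_bool (w u = 0) + of_bool (w u = 1) + of_bool (w u = 2))"
    using w_le by (intro sum.cong refl) (auto simp: le_Suc_eq numeral_2_eq_2)
  also have "\<dots> = card {u. u < t \<and> w u = 0} + q"
    using two weight_sum by (simp add: count sum.distrib)
  finally show "card {u. u < t \<and> w u = 0} + q = t"
    by simp
qed

section \<open>Points and lines of \<open>PG(2,q)\<close>\<close>

locale cubic_extension =
  fixes q :: nat and \<alpha> :: "'a::{field,finite}"
  assumes q_ge_2: "q \<ge> 2"
    and card_UNIV: "card (UNIV :: 'a set) = q ^ 3"
    and power_q_add: "\<And>x y :: 'a. (x + y) ^ q = x ^ q + y ^ q"
    and primitive: "primitive_elem \<alpha>"
begin

abbreviation Fq :: "'a set" where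
  "Fq \<equiv> subF q"

definition N :: nat where
  "N = q^2 + q + 1"

lemma N_pos: "N > 0"
  by (simp add: N_def)

lemma q_cube_minus_one: "q ^ 3 - 1 = (q - 1) * N"
  unfolding N_def using q_ge_2
  by (cases q) (auto simp: algebra_simps power2_eq_square power3_eq_cube)

lemma alpha_nonzero [simp]: "\<alpha> \<noteq> 0"
proof
  assume "\<alpha> = 0"
  have "x \<in> {0, 1}" for x :: 'a
  proof -
    obtain i where "x = 0 \<or> x = \<alpha> ^ i"
      using primitive unfolding primitive_elem_def by blast
    thus ?thesis
      using \<open>\<alpha> = 0\<close> by (auto simp: power_0_left split: if_splits)
  qed
  hence "UNIV \<subseteq> {0, 1::'a}"
    by blast
  hence "card (UNIV :: 'a set) \<le> 2"
    using card_mono[of "{0, 1::'a}" UNIV] by (simp add: card_insert_if)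
  moreover have "(2::nat) ^ 3 \<le> q ^ 3"
    using q_ge_2 by (rule power_mono) simp
  ultimately show False
    using card_UNIV by simp
qed

lemma alpha_power_eq_iff: "\<alpha> ^ i = \<alpha> ^ j \<longleftrightarrow> i mod (q ^ 3 - 1) = j mod (q ^ 3 - 1)"
  using primitive_elem_power_eq_iff[OF primitive alpha_nonzero] by (simp add: card_UNIV)

lemma subF_iff: "x \<in> Fq \<longleftrightarrow> x ^ q = x"
  by (simp add: subF_def)

lemma zero_in_subF [simp]: "0 \<in> Fq"
  using q_ge_2 by (simp add: subF_iff)

lemma one_in_subF [simp]: "1 \<in> Fq"
  by (simp add: subF_iff)

lemma subF_mult: "x \<in> Fq \<Longrightarrow> y \<in> Fq \<Longrightarrow> x * y \<in> Fq"
  by (simp add: subF_iff power_mult_distrib)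

lemma subF_add: "x \<in> Fq \<Longrightarrow> y \<in> Fq \<Longrightarrow> x + y \<in> Fq"
  by (simp add: subF_iff power_q_add)

lemma subF_uminus: "x \<in> Fq \<Longrightarrow> - x \<in> Fq"
proof -
  have "x ^ q + (- x) ^ q = 0"
    using power_q_add[of x "- x"] q_ge_2 by (simp add: power_0_left)
  thus "x \<in> Fq \<Longrightarrow> - x \<in> Fq"
    by (simp add: subF_iff add_eq_0_iff)
qed

lemma subF_diff: "x \<in> Fq \<Longrightarrow> y \<in> Fq \<Longrightarrow> x - y \<in> Fq"
  using subF_add subF_uminus by (metis diff_conv_add_uminus)

lemma subF_divide: "x \<in> Fq \<Longrightarrow> y \<in> Fq \<Longrightarrow> x / y \<in> Fq"
  by (simp add: subF_iff power_divide)

lemma quadratic_root_power_q: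
  assumes "A \<in> Fq" "B \<in> Fq" "z ^ 2 = A * z + B"
  shows "(z ^ q) ^ 2 = A * z ^ q + B"
proof -
  have "(z ^ q) ^ 2 = (z ^ 2) ^ q"
    by (simp flip: power_mult add: mult.commute)
  also have "\<dots> = A ^ q * z ^ q + B ^ q"
    using assms(3) by (simp add: power_q_add power_mult_distrib)
  finally show ?thesis
    using assms(1,2) by (simp add: subF_iff)
qed

lemma alpha_power_in_subF_iff: "\<alpha> ^ i \<in> Fq \<longleftrightarrow> N dvd i"
proof -
  have "\<alpha> ^ i \<in> Fq \<longleftrightarrow> \<alpha> ^ (i * q) = \<alpha> ^ i"
    by (simp add: subF_iff power_mult)
  also have "\<dots> \<longleftrightarrow> (q ^ 3 - 1) dvd (i * q - i)"
    unfolding alpha_power_eq_iff using q_ge_2 by (intro mod_eq_dvd_iff_nat) simp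
  also have "i * q - i = i * (q - 1)"
    by (simp add: diff_mult_distrib2)
  also have "(q ^ 3 - 1) dvd i * (q - 1) \<longleftrightarrow> N dvd i"
    unfolding q_cube_minus_one using q_ge_2 by (simp add: mult.commute[of i])
  finally show ?thesis .
qed

lemma alpha_power_N_eq_iff: "\<alpha> ^ (N * a) = \<alpha> ^ (N * b) \<longleftrightarrow> a mod (q - 1) = b mod (q - 1)"
  unfolding alpha_power_eq_iff q_cube_minus_one mult.commute[of "q - 1" N] mod_mult_mult1
  using N_pos by simp

lemma card_subF: "card Fq = q"
proof -
  have image: "Fq - {0} = (\<lambda>j. \<alpha> ^ (N * j)) ` {..<q - 1}"
  proof
    show "Fq - {0} \<subseteq> (\<lambda>j. \<alpha> ^ (N * j)) ` {..<q - 1}"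
    proof
      fix x
      assume x: "x \<in> Fq - {0}"
      then obtain i where i: "x = \<alpha> ^ i"
        using primitive unfolding primitive_elem_def by blast
      hence "N dvd i"
        using x alpha_power_in_subF_iff by simp
      then obtain m where "x = \<alpha> ^ (N * m)"
        using i by (auto elim: dvdE)
      moreover have "\<alpha> ^ (N * m) = \<alpha> ^ (N * (m mod (q - 1)))"
        unfolding alpha_power_N_eq_iff by simp
      moreover have "m mod (q - 1) < q - 1"
        using q_ge_2 by simp
      ultimately show "x \<in> (\<lambda>j. \<alpha> ^ (N * j)) ` {..<q - 1}"
        by blast
    qed
  qed (auto simp: alpha_power_in_subF_iff)
  have inj: "inj_on (\<lambda>j. \<alpha> ^ (N * j)) {..<q - 1}"
  proof (rule inj_onI)
    fix a b
    assume "a \<in> {..<q - 1}" "b \<in> {..<q - 1}" "\<alpha> ^ (N * a) = \<alpha> ^ (N * b)"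
    thus "a = b"
      unfolding alpha_power_N_eq_iff by simp
  qed
  have "card (Fq - {0}) = q - 1"
    unfolding image card_image[OF inj] by simp
  moreover have "card Fq = Suc (card (Fq - {0}))"
    using card_Suc_Diff1[of Fq 0] by simp
  ultimately show ?thesis
    using q_ge_2 by linarith
qed

lemma nonzero_eq_subF_times_alpha_power:
  assumes "x \<noteq> 0"
  obtains c v where "c \<in> Fq" "c \<noteq> 0" "v < N" "x = c * \<alpha> ^ v"
proof -
  obtain i where "x = \<alpha> ^ i"
    using assms primitive unfolding primitive_elem_def by blast
  hence "x = \<alpha> ^ (N * (i div N)) * \<alpha> ^ (i mod N)"
    by (simp flip: power_add)
  moreover have "\<alpha> ^ (N * (i div N)) \<in> Fq"
    by (simp add: alpha_power_in_subF_iff)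
  ultimately show ?thesis
    using that[of "\<alpha> ^ (N * (i div N))" "i mod N"] N_pos by simp
qed

lemma subF_times_alpha_power_eq_imp_eq:
  assumes "c \<in> Fq" "c \<noteq> 0" "c' \<in> Fq" "c' \<noteq> 0" "v < N" "v' < N"
    and "c * \<alpha> ^ v = c' * \<alpha> ^ v'"
  shows "v = v'"
proof -
  obtain i j where "c = \<alpha> ^ i" "c' = \<alpha> ^ j"
    using assms(2,4) primitive unfolding primitive_elem_def by blast
  with assms(1,3) obtain a b where ab: "c = \<alpha> ^ (N * a)" "c' = \<alpha> ^ (N * b)"
    by (auto simp: alpha_power_in_subF_iff elim!: dvdE)
  have "\<alpha> ^ (N * a + v) = \<alpha> ^ (N * b + v')"
    using assms(7) ab by (simp add: power_add)
  hence "(N * a + v) mod ((q - 1) * N) mod N = (N * b + v') mod ((q - 1) * N) mod N"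
    unfolding alpha_power_eq_iff q_cube_minus_one by simp
  hence "(N * a + v) mod N = (N * b + v') mod N"
    by (simp add: mod_mod_cancel)
  thus ?thesis
    using assms(5,6) by simp
qed

definition scalar_closed :: "'a set \<Rightarrow> bool" where
  "scalar_closed X \<longleftrightarrow> (\<forall>c\<in>Fq. \<forall>x\<in>X. c * x \<in> X)"

definition point_indices :: "'a set \<Rightarrow> nat set" where
  "point_indices X = {v. v < N \<and> \<alpha> ^ v \<in> X}"

lemma point_indices_subset: "point_indices X \<subseteq> {..<N}"
  by (auto simp: point_indices_def)

lemma scalar_closed_mult_iff:
  assumes "scalar_closed X" "c \<in> Fq" "c \<noteq> 0"
  shows "c * x \<in> X \<longleftrightarrow> x \<in> X"
proof
  assume "c * x \<in> X"
  hence "inverse c * (c * x) \<in> X"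
    using assms subF_divide[OF one_in_subF assms(2)] unfolding scalar_closed_def
    by (simp add: divide_inverse)
  thus "x \<in> X"
    using assms(3) by (simp add: mult.assoc[symmetric])
qed (use assms in \<open>auto simp: scalar_closed_def\<close>)

lemma card_scalar_closed:
  assumes "scalar_closed X"
  shows "card (X - {0}) = (q - 1) * card (point_indices X)"
proof -
  let ?f = "\<lambda>(c, v). c * \<alpha> ^ v"
  have image: "X - {0} = ?f ` ((Fq - {0}) \<times> point_indices X)"
  proof
    show "X - {0} \<subseteq> ?f ` ((Fq - {0}) \<times> point_indices X)"
    proof
      fix x
      assume x: "x \<in> X - {0}"
      then obtain c v where cv: "c \<in> Fq" "c \<noteq> 0" "v < N" "x = c * \<alpha> ^ v"
        using nonzero_eq_subF_times_alpha_power by blast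
      hence "v \<in> point_indices X"
        using x scalar_closed_mult_iff[OF assms] by (simp add: point_indices_def)
      thus "x \<in> ?f ` ((Fq - {0}) \<times> point_indices X)"
        using cv by force
    qed
  qed (use assms in \<open>auto simp: scalar_closed_def point_indices_def\<close>)
  have "inj_on ?f ((Fq - {0}) \<times> point_indices X)"
  proof (rule inj_onI)
    fix a b
    assume a: "a \<in> (Fq - {0}) \<times> point_indices X" and b: "b \<in> (Fq - {0}) \<times> point_indices X"
      and eq: "?f a = ?f b"
    obtain c v c' v' where ab: "a = (c, v)" "b = (c', v')"
      by force
    have "v = v'"
      using a b eq unfolding ab
      by (intro subF_times_alpha_power_eq_imp_eq[of c c']) (auto simp: point_indices_def)
    thus "a = b"
      using eq unfolding ab by simp
  qed
  hence "card (X - {0}) = card (Fq - {0}) * card (point_indices X)"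
    unfolding image by (simp add: card_image card_cartesian_product)
  thus ?thesis
    by (simp add: card_Diff_singleton card_subF)
qed

lemma scalar_closed_alpha_power_mod:
  assumes "scalar_closed X"
  shows "\<alpha> ^ i \<in> X \<longleftrightarrow> \<alpha> ^ (i mod N) \<in> X"
proof -
  have "\<alpha> ^ i = \<alpha> ^ (N * (i div N)) * \<alpha> ^ (i mod N)"
    by (simp flip: power_add)
  moreover have "\<alpha> ^ (N * (i div N)) \<in> Fq"
    by (simp add: alpha_power_in_subF_iff)
  ultimately show ?thesis
    using scalar_closed_mult_iff[OF assms] by simp
qed

definition span2 :: "'a \<Rightarrow> 'a \<Rightarrow> 'a set" where
  "span2 x y = {a * x + b * y | a b. a \<in> Fq \<and> b \<in> Fq}"

definition indep2 :: "'a \<Rightarrow> 'a \<Rightarrow> bool" where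
  "indep2 x y \<longleftrightarrow> (\<forall>a b. a \<in> Fq \<longrightarrow> b \<in> Fq \<longrightarrow> a * x + b * y = 0 \<longrightarrow> a = 0 \<and> b = 0)"

lemma pg_line_iff: "pg_line q L \<longleftrightarrow> (\<exists>x y. L = span2 x y \<and> indep2 x y)"
  unfolding pg_line_def span2_def indep2_def ..

lemma scalar_closed_span2: "scalar_closed (span2 x y)"
  unfolding scalar_closed_def span2_def
proof (intro ballI)
  fix c z
  assume "c \<in> Fq" "z \<in> {a * x + b * y | a b. a \<in> Fq \<and> b \<in> Fq}"
  then obtain a b where "a \<in> Fq" "b \<in> Fq" "z = a * x + b * y"
    by blast
  thus "c * z \<in> {a * x + b * y | a b. a \<in> Fq \<and> b \<in> Fq}"
    using \<open>c \<in> Fq\<close> by (intro CollectI exI[of _ "c * a"] exI[of _ "c * b"])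
      (auto simp: subF_mult algebra_simps)
qed

lemma span2_add: "z \<in> span2 x y \<Longrightarrow> z' \<in> span2 x y \<Longrightarrow> z + z' \<in> span2 x y"
proof -
  assume "z \<in> span2 x y" "z' \<in> span2 x y"
  then obtain a b a' b' where "a \<in> Fq" "b \<in> Fq" "z = a * x + b * y"
    and "a' \<in> Fq" "b' \<in> Fq" "z' = a' * x + b' * y"
    unfolding span2_def by blast
  thus ?thesis
    unfolding span2_def
    by (intro CollectI exI[of _ "a + a'"] exI[of _ "b + b'"]) (auto simp: subF_add algebra_simps)
qed

lemma span2_diff: "z \<in> span2 x y \<Longrightarrow> z' \<in> span2 x y \<Longrightarrow> z - z' \<in> span2 x y"
  using span2_add scalar_closed_span2 subF_uminus[OF one_in_subF]
  unfolding scalar_closed_def by (metis diff_conv_add_uminus mult_minus1)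

lemma zero_in_span2: "0 \<in> span2 x y"
  unfolding span2_def by (force intro!: exI[of _ 0])

lemma left_in_span2: "x \<in> span2 x y"
proof -
  have "1 * x + 0 * y \<in> span2 x y"
    using one_in_subF zero_in_subF unfolding span2_def by blast
  thus ?thesis
    by simp
qed

lemma indep2_nonzero: "indep2 x y \<Longrightarrow> x \<noteq> 0"
  unfolding indep2_def using one_in_subF zero_in_subF by fastforce

lemma span2_subset:
  assumes "scalar_closed Z" "\<And>z z'. z \<in> Z \<Longrightarrow> z' \<in> Z \<Longrightarrow> z + z' \<in> Z" "u \<in> Z" "w \<in> Z"
  shows "span2 u w \<subseteq> Z"
  using assms unfolding span2_def scalar_closed_def by blast

lemma card_span2:
  assumes "indep2 x y"
  shows "card (span2 x y) = q ^ 2"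
proof -
  let ?f = "\<lambda>(a, b). a * x + b * y"
  have "inj_on ?f (Fq \<times> Fq)"
  proof (rule inj_onI)
    fix u w
    assume u: "u \<in> Fq \<times> Fq" and w: "w \<in> Fq \<times> Fq" and eq: "?f u = ?f w"
    obtain a b a' b' where ab: "u = (a, b)" "w = (a', b')"
      by force
    have "(a - a') * x + (b - b') * y = 0"
      using eq ab by (simp add: algebra_simps)
    moreover have "a - a' \<in> Fq" "b - b' \<in> Fq"
      using u w ab subF_diff by auto
    ultimately have "a - a' = 0 \<and> b - b' = 0"
      using assms unfolding indep2_def by blast
    thus "u = w"
      using ab by simp
  qed
  moreover have "span2 x y = ?f ` (Fq \<times> Fq)"
    unfolding span2_def by auto
  ultimately show ?thesis
    by (simp add: card_image card_cartesian_product card_subF power2_eq_square)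
qed

lemma card_point_indices_span2:
  assumes "indep2 x y"
  shows "card (point_indices (span2 x y)) = q + 1"
proof -
  have "(q - 1) * card (point_indices (span2 x y)) = card (span2 x y - {0})"
    using card_scalar_closed scalar_closed_span2 by simp
  also have "\<dots> = q ^ 2 - 1"
    using card_span2[OF assms] zero_in_span2 by (simp add: card_Diff_singleton)
  also have "\<dots> = (q - 1) * (q + 1)"
    by (simp add: power2_eq_square algebra_simps)
  finally have "(q - 1) * card (point_indices (span2 x y)) = (q - 1) * (q + 1)" .
  moreover have "q - 1 \<noteq> 0"
    using q_ge_2 by simp
  ultimately show ?thesis
    by (meson mult_left_cancel)
qed

lemma span2_eq_if_subset:
  assumes "indep2 u w" "indep2 x y" "span2 u w \<subseteq> span2 x y"
  shows "span2 u w = span2 x y"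
  using assms card_span2 by (intro card_subset_eq) auto

lemma span2_inter_nonzero:
  assumes "indep2 x y" "indep2 x' y'"
  obtains u where "u \<noteq> 0" "u \<in> span2 x y" "u \<in> span2 x' y'"
proof (rule ccontr)
  assume trivial: "\<not> thesis"
  have "inj_on (\<lambda>(l, m). l + m) (span2 x y \<times> span2 x' y')"
  proof (rule inj_onI)
    fix a b
    assume a: "a \<in> span2 x y \<times> span2 x' y'" and b: "b \<in> span2 x y \<times> span2 x' y'"
      and eq: "(\<lambda>(l, m). l + m) a = (\<lambda>(l, m). l + m) b"
    obtain l m l' m' where ab: "a = (l, m)" "b = (l', m')"
      by force
    have "l - l' = m' - m"
      using eq ab by (simp add: algebra_simps)
    moreover have "l - l' \<in> span2 x y" "m' - m \<in> span2 x' y'"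
      using a b ab span2_diff by auto
    ultimately have "l - l' = 0"
      using trivial that by metis
    thus "a = b"
      using eq ab by simp
  qed
  hence "card (span2 x y) * card (span2 x' y') \<le> card (UNIV :: 'a set)"
    using card_mono[of UNIV "(\<lambda>(l, m). l + m) ` (span2 x y \<times> span2 x' y')"]
    by (simp add: card_image card_cartesian_product)
  hence "q ^ 2 * q ^ 2 \<le> q ^ 3"
    using assms by (simp add: card_span2 card_UNIV)
  moreover have "q ^ 3 < q ^ 2 * q ^ 2"
    using q_ge_2 by (simp flip: power_add add: power_strict_increasing)
  ultimately show False
    by simp
qed

lemma indep2_if_not_multiple:
  assumes "u \<noteq> 0" "w \<notin> (\<lambda>c. c * u) ` Fq"
  shows "indep2 u w"
  unfolding indep2_def
proof (intro allI impI)
  fix a b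
  assume ab: "a \<in> Fq" "b \<in> Fq" "a * u + b * w = 0"
  show "a = 0 \<and> b = 0"
  proof (cases "b = 0")
    case True
    thus ?thesis
      using ab assms(1) by simp
  next
    case False
    hence "w = (- a / b) * u"
      using ab(3) by (simp add: field_simps add_eq_0_iff)
    moreover have "- a / b \<in> Fq"
      using ab subF_divide subF_uminus by simp
    ultimately show ?thesis
      using assms(2) by blast
  qed
qed

lemma span2_inter_eq_multiples:
  assumes "indep2 x y" "indep2 x' y'" "span2 x y \<noteq> span2 x' y'"
    and "u \<noteq> 0" "u \<in> span2 x y \<inter> span2 x' y'"
  shows "span2 x y \<inter> span2 x' y' = (\<lambda>c. c * u) ` Fq"
proof
  let ?I = "span2 x y \<inter> span2 x' y'"
  have closed: "scalar_closed ?I"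
    using scalar_closed_span2 unfolding scalar_closed_def by blast
  thus "(\<lambda>c. c * u) ` Fq \<subseteq> ?I"
    using assms(5) unfolding scalar_closed_def by blast
  show "?I \<subseteq> (\<lambda>c. c * u) ` Fq"
  proof (rule subsetI, rule ccontr)
    fix w
    assume w: "w \<in> ?I" and "w \<notin> (\<lambda>c. c * u) ` Fq"
    hence indep: "indep2 u w"
      using indep2_if_not_multiple assms(4) by blast
    have "span2 u w \<subseteq> ?I"
      by (rule span2_subset[OF closed]) (use span2_add assms(5) w in auto)
    hence "span2 u w = span2 x y" "span2 u w = span2 x' y'"
      using span2_eq_if_subset[OF indep] assms(1,2) by auto
    thus False
      using assms(3) by simp
  qed
qed

lemma card_point_indices_inter_span2:
  assumes "indep2 x y" "indep2 x' y'" "span2 x y \<noteq> span2 x' y'"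
  shows "card (point_indices (span2 x y \<inter> span2 x' y')) = 1"
proof -
  let ?I = "span2 x y \<inter> span2 x' y'"
  obtain u where u: "u \<noteq> 0" "u \<in> ?I"
    using span2_inter_nonzero[OF assms(1,2)] by blast
  have "card ?I = card Fq"
    using u(1) card_image[of "\<lambda>c. c * u" Fq] span2_inter_eq_multiples[OF assms u]
    by (simp add: inj_on_def)
  moreover have "scalar_closed ?I"
    using scalar_closed_span2 unfolding scalar_closed_def by blast
  ultimately have "(q - 1) * card (point_indices ?I) = (q - 1) * 1"
    using card_scalar_closed[of ?I] zero_in_span2 by (auto simp: card_Diff_singleton card_subF)
  moreover have "q - 1 \<noteq> 0"
    using q_ge_2 by simp
  ultimately show ?thesis
    by (meson mult_left_cancel)
qed

lemma span2_preimage_mult: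
  assumes "c \<noteq> 0"
  shows "{z. c * z \<in> span2 x y} = span2 (x / c) (y / c)"
proof -
  have "c * z = a * x + b * y \<longleftrightarrow> z = a * (x / c) + b * (y / c)" for z a b
    using assms by (auto simp: field_simps)
  thus ?thesis
    unfolding span2_def by simp
qed

lemma indep2_divide:
  assumes "c \<noteq> 0" "indep2 x y"
  shows "indep2 (x / c) (y / c)"
proof -
  have "a * (x / c) + b * (y / c) = 0 \<longleftrightarrow> a * x + b * y = 0" for a b
    using assms(1) by (auto simp: field_simps)
  thus ?thesis
    using assms(2) unfolding indep2_def by simp
qed

lemma alpha_power_in_pg_point: "\<alpha> ^ v \<in> pg_point q \<alpha> v"
  unfolding pg_point_def by (force intro!: exI[of _ 1])

lemma pg_point_subset_iff:
  assumes "scalar_closed X"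
  shows "pg_point q \<alpha> v \<subseteq> X \<longleftrightarrow> \<alpha> ^ v \<in> X"
proof
  show "pg_point q \<alpha> v \<subseteq> X \<Longrightarrow> \<alpha> ^ v \<in> X"
    using alpha_power_in_pg_point by blast
  show "\<alpha> ^ v \<in> X \<Longrightarrow> pg_point q \<alpha> v \<subseteq> X"
    using assms unfolding pg_point_def scalar_closed_def by auto
qed

lemma inj_on_pg_point: "inj_on (pg_point q \<alpha>) {..<N}"
proof (rule inj_onI)
  fix v w
  assume v: "v \<in> {..<N}" and w: "w \<in> {..<N}" and eq: "pg_point q \<alpha> v = pg_point q \<alpha> w"
  have "\<alpha> ^ v \<in> pg_point q \<alpha> w"
    using alpha_power_in_pg_point[of v] eq by simp
  then obtain c where c: "c \<in> Fq" "\<alpha> ^ v = c * \<alpha> ^ w"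
    unfolding pg_point_def by blast
  moreover from c(2) have "c \<noteq> 0"
    by auto
  ultimately show "v = w"
    using subF_times_alpha_power_eq_imp_eq[of 1 c v w] v w by simp
qed

end

section \<open>The orbits of multiplication by \<open>\<beta> = \<alpha>\<^sup>t\<close>\<close>

locale cubic_extension_3 = cubic_extension +
  assumes three_dvd_N: "3 dvd N"
begin

definition t :: nat where
  "t = N div 3"

definition \<beta> :: 'a where
  "\<beta> = \<alpha> ^ t"

lemma N_eq: "N = 3 * t"
  using three_dvd_N by (simp add: t_def)

lemma t_pos: "t > 0"
  using N_eq N_pos by simp

lemma beta_nonzero [simp]: "\<beta> \<noteq> 0"
  by (simp add: \<beta>_def)

lemma q_mod_3: "q mod 3 = 1"
proof -
  have "[q ^ 2 + q + 1 = (q mod 3) ^ 2 + q mod 3 + 1] (mod 3)"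
    by (intro cong_add cong_pow) (simp_all add: cong_def)
  hence "((q mod 3) ^ 2 + q mod 3 + 1) mod 3 = 0"
    using three_dvd_N unfolding N_def cong_def by simp
  moreover have "q mod 3 = 0 \<or> q mod 3 = 1 \<or> q mod 3 = 2"
    by arith
  ultimately show ?thesis
    by auto
qed

lemma beta_power_eq_iff:
  assumes "a \<le> b"
  shows "\<beta> ^ a = \<beta> ^ b \<longleftrightarrow> 3 * (q - 1) dvd b - a"
proof -
  have "\<beta> ^ a = \<beta> ^ b \<longleftrightarrow> (t * b) mod (q ^ 3 - 1) = (t * a) mod (q ^ 3 - 1)"
    unfolding \<beta>_def power_mult[symmetric] alpha_power_eq_iff by auto
  also have "\<dots> \<longleftrightarrow> (q ^ 3 - 1) dvd (t * b - t * a)"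
    using assms by (intro mod_eq_dvd_iff_nat) simp
  also have "q ^ 3 - 1 = t * (3 * (q - 1))"
    unfolding q_cube_minus_one N_eq by (simp add: ac_simps)
  also have "t * b - t * a = t * (b - a)"
    by (simp add: diff_mult_distrib2)
  finally show ?thesis
    using t_pos by simp
qed

lemma beta_not_in_subF: "\<beta> \<notin> Fq"
  unfolding \<beta>_def alpha_power_in_subF_iff N_eq using t_pos by simp

lemma beta_conjugates_distinct: "\<beta> ^ q \<noteq> \<beta>" "\<beta> ^ (q ^ 2) \<noteq> \<beta>" "\<beta> ^ (q ^ 2) \<noteq> \<beta> ^ q"
proof -
  have not_dvd: "\<not> 3 * (q - 1) dvd (q - 1) * k" if "\<not> 3 dvd k" for k
    using that q_ge_2 by (simp add: mult.commute[of 3])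
  have "\<not> 3 dvd q + 1" "\<not> 3 dvd q"
    using q_mod_3 by (simp_all add: dvd_eq_mod_eq_0 mod_Suc)
  moreover have "q - 1 = (q - 1) * 1" "q ^ 2 - 1 = (q - 1) * (q + 1)" "q ^ 2 - q = (q - 1) * q"
    using q_ge_2 by (simp_all add: power2_eq_square algebra_simps)
  ultimately have "\<not> 3 * (q - 1) dvd q - 1" "\<not> 3 * (q - 1) dvd q ^ 2 - 1"
    "\<not> 3 * (q - 1) dvd q ^ 2 - q"
    using not_dvd[of 1] not_dvd[of "q + 1"] not_dvd[of q] by simp_all
  moreover have "1 \<le> q" "1 \<le> q ^ 2" "q \<le> q ^ 2"
    using q_ge_2 by (simp_all add: power2_eq_square)
  ultimately show "\<beta> ^ q \<noteq> \<beta>" "\<beta> ^ (q ^ 2) \<noteq> \<beta>" "\<beta> ^ (q ^ 2) \<noteq> \<beta> ^ q"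
    using beta_power_eq_iff[of 1 q] beta_power_eq_iff[of 1 "q ^ 2"] beta_power_eq_iff[of q "q ^ 2"]
    by auto
qed

text \<open>Otherwise \<open>\<beta>\<close> would either lie in \<open>\<bbbF>\<^sub>q\<close> or be a root of a quadratic over \<open>\<bbbF>\<^sub>q\<close>, which would then have the three roots
  \<open>\<beta>, \<beta>\<^sup>q, \<beta>\<^sup>q\<^sup>2\<close>.\<close>
lemma beta_linear_independent:
  assumes "a \<in> Fq" "b \<in> Fq" "c \<in> Fq" "a + b * \<beta> + c * \<beta> ^ 2 = 0"
  shows "a = 0 \<and> b = 0 \<and> c = 0"
proof (cases "c = 0")
  case True
  have "b = 0"
  proof (rule ccontr)
    assume "b \<noteq> 0"
    hence "\<beta> = - a / b"
      using assms(4) True by (simp add: field_simps add_eq_0_iff)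
    thus False
      using assms(1,2) beta_not_in_subF subF_divide subF_uminus by simp
  qed
  thus ?thesis
    using True assms(4) by simp
next
  case False
  define A B where "A = - b / c" and "B = - a / c"
  have AB: "A \<in> Fq" "B \<in> Fq"
    unfolding A_def B_def using assms(1-3) subF_divide subF_uminus by auto
  have root1: "\<beta> ^ 2 = A * \<beta> + B"
    using assms(4) False unfolding A_def B_def by (simp add: field_simps add_eq_0_iff)
  have root2: "(\<beta> ^ q) ^ 2 = A * \<beta> ^ q + B"
    by (rule quadratic_root_power_q[OF AB root1])
  have root3: "(\<beta> ^ (q ^ 2)) ^ 2 = A * \<beta> ^ (q ^ 2) + B"
    using quadratic_root_power_q[OF AB root2] by (simp add: power2_eq_square power_mult)
  show ?thesis
    using monic_quadratic_at_most_two_roots[OF root1 root2 root3] beta_conjugates_distinct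
    by auto
qed

lemma span2_no_beta_orbit:
  assumes "indep2 x y" "z \<noteq> 0" "z \<in> span2 x y" "\<beta> * z \<in> span2 x y" "\<beta> ^ 2 * z \<in> span2 x y"
  shows False
proof -
  let ?f = "\<lambda>(a, b, c). a * z + b * (\<beta> * z) + c * (\<beta> ^ 2 * z)"
  have "?f ` (Fq \<times> Fq \<times> Fq) \<subseteq> span2 x y"
  proof clarify
    fix a b c
    assume "a \<in> Fq" "b \<in> Fq" "c \<in> Fq"
    hence "a * z \<in> span2 x y" "b * (\<beta> * z) \<in> span2 x y" "c * (\<beta> ^ 2 * z) \<in> span2 x y"
      using assms(3-5) scalar_closed_span2 unfolding scalar_closed_def by auto
    thus "a * z + b * (\<beta> * z) + c * (\<beta> ^ 2 * z) \<in> span2 x y"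
      using span2_add by simp
  qed
  moreover have "inj_on ?f (Fq \<times> Fq \<times> Fq)"
  proof (rule inj_onI)
    fix u w
    assume u: "u \<in> Fq \<times> Fq \<times> Fq" and w: "w \<in> Fq \<times> Fq \<times> Fq" and eq: "?f u = ?f w"
    obtain a b c a' b' c' where abc: "u = (a, b, c)" "w = (a', b', c')"
      by (metis prod_cases3)
    have "z * ((a - a') + (b - b') * \<beta> + (c - c') * \<beta> ^ 2) = 0"
      using eq abc by (simp add: algebra_simps)
    hence "(a - a') + (b - b') * \<beta> + (c - c') * \<beta> ^ 2 = 0"
      using assms(2) by simp
    moreover have "a - a' \<in> Fq" "b - b' \<in> Fq" "c - c' \<in> Fq"
      using u w abc subF_diff by auto
    ultimately have "a - a' = 0 \<and> b - b' = 0 \<and> c - c' = 0"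
      using beta_linear_independent by blast
    thus "u = w"
      using abc by simp
  qed
  ultimately have "q ^ 3 \<le> q ^ 2"
    using card_mono[of "span2 x y" "?f ` (Fq \<times> Fq \<times> Fq)"] card_span2[OF assms(1)]
    by (simp add: card_image card_cartesian_product card_subF power3_eq_cube power2_eq_square)
  moreover have "q ^ 2 < q ^ 3"
    using q_ge_2 by (simp add: power_strict_increasing)
  ultimately show False
    by simp
qed

lemma span2_not_beta_invariant:
  assumes "indep2 x y"
  shows "{z. \<beta> * z \<in> span2 x y} \<noteq> span2 x y"
proof
  assume invariant: "{z. \<beta> * z \<in> span2 x y} = span2 x y"
  have "x \<in> span2 x y"
    by (rule left_in_span2)
  hence "\<beta> * x \<in> span2 x y" "\<beta> ^ 2 * x \<in> span2 x y"
    using invariant by (auto simp: power2_eq_square mult.assoc)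
  thus False
    using span2_no_beta_orbit[OF assms indep2_nonzero[OF assms] \<open>x \<in> span2 x y\<close>] by simp
qed

lemma card_point_indices_beta_pairs:
  assumes "indep2 x y"
  shows "card {v \<in> point_indices (span2 x y). (v + t) mod N \<in> point_indices (span2 x y)} = 1"
proof -
  let ?M = "{z. \<beta> * z \<in> span2 x y}"
  have "{v \<in> point_indices (span2 x y). (v + t) mod N \<in> point_indices (span2 x y)}
      = point_indices (span2 x y \<inter> ?M)"
    using scalar_closed_alpha_power_mod[OF scalar_closed_span2, of "_ + t"]
    by (auto simp: point_indices_def \<beta>_def power_add mult.commute)
  also have "?M = span2 (x / \<beta>) (y / \<beta>)"
    by (rule span2_preimage_mult) simp
  moreover have "span2 x y \<noteq> span2 (x / \<beta>) (y / \<beta>)"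
    using span2_not_beta_invariant[OF assms] span2_preimage_mult by simp
  ultimately show ?thesis
    using card_point_indices_inter_span2[OF assms indep2_divide[OF beta_nonzero assms]] by simp
qed

lemma no_full_residue_class:
  assumes "indep2 x y" "u < t"
  shows "\<not> {u, u + t, u + 2 * t} \<subseteq> point_indices (span2 x y)"
proof
  assume "{u, u + t, u + 2 * t} \<subseteq> point_indices (span2 x y)"
  hence "\<alpha> ^ u \<in> span2 x y" "\<beta> * \<alpha> ^ u \<in> span2 x y" "\<beta> ^ 2 * \<alpha> ^ u \<in> span2 x y"
    by (auto simp: point_indices_def \<beta>_def power_add mult.commute mult_2_right
        simp flip: power_mult)
  thus False
    by (intro span2_no_beta_orbit[OF assms(1), of "\<alpha> ^ u"]) simp_all
qed

lemma orbit_weight_eq_card_residue_class: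
  assumes "scalar_closed L" "u < t"
  shows "orbit_weight q \<alpha> L t u = card {v \<in> point_indices L. v mod t = u}"
proof -
  have "{v. v < q^2 + q + 1 \<and> v mod t = u mod t \<and> pg_point q \<alpha> v \<subseteq> L}
      = {v \<in> point_indices L. v mod t = u}"
    using assms by (auto simp: pg_point_subset_iff point_indices_def N_def)
  hence "orbit_weight q \<alpha> L t u = card (pg_point q \<alpha> ` {v \<in> point_indices L. v mod t = u})"
    unfolding orbit_weight_def by (simp add: setcompr_eq_image)
  also have "\<dots> = card {v \<in> point_indices L. v mod t = u}"
    using point_indices_subset by (intro card_image inj_on_subset[OF inj_on_pg_point]) auto
  finally show ?thesis .
qed

lemma orbit_weight_counts:
  assumes "pg_line q L"
  shows "\<forall>u<t. orbit_weight q \<alpha> L t u \<le> 2"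
    and "card {u. u < t \<and> orbit_weight q \<alpha> L t u = 2} = 1"
    and "card {u. u < t \<and> orbit_weight q \<alpha> L t u = 1} = q - 1"
    and "card {u. u < t \<and> orbit_weight q \<alpha> L t u = 0} + q = t"
proof -
  obtain x y where L: "L = span2 x y" and indep: "indep2 x y"
    using assms pg_line_iff by blast
  let ?S = "point_indices L"
  have weight: "orbit_weight q \<alpha> L t u = card {v \<in> ?S. v mod t = u}" if "u < t" for u
    using orbit_weight_eq_card_residue_class[OF _ that] scalar_closed_span2 L by simp
  have "{u. u < t \<and> orbit_weight q \<alpha> L t u = j} = {u. u < t \<and> card {v \<in> ?S. v mod t = u} = j}"
    for j
    using weight by auto
  moreover note residue_class_counts[of ?S t q]
  moreover have "?S \<subseteq> {..<3 * t}"
    using point_indices_subset N_eq by simp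
  ultimately show "\<forall>u<t. orbit_weight q \<alpha> L t u \<le> 2"
    and "card {u. u < t \<and> orbit_weight q \<alpha> L t u = 2} = 1"
    and "card {u. u < t \<and> orbit_weight q \<alpha> L t u = 1} = q - 1"
    and "card {u. u < t \<and> orbit_weight q \<alpha> L t u = 0} + q = t"
    using weight L card_point_indices_span2[OF indep] card_point_indices_beta_pairs[OF indep]
      no_full_residue_class[OF indep] N_eq
    by simp_all
qed

end

theorem proposition9:
  fixes p h q :: nat and \<alpha> :: "'a::{field,finite}" and L :: "'a set" and t :: nat
  assumes "prime p" and "h \<ge> 1" and "q = p ^ h"
    and "card (UNIV :: 'a set) = q ^ 3"
    and "primitive_elem \<alpha>"
    and "pg_line q L"
    and "tau_fixed p q \<alpha> L"
    and "3 dvd (q^2 + q + 1)"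
    and "t = (q^2 + q + 1) div 3"
  shows "(\<forall>u < t. orbit_weight q \<alpha> L t u \<le> 2)
       \<and> 3 * int (card {u. u < t \<and> orbit_weight q \<alpha> L t u = 0}) = int q ^ 2 - 2 * int q + 1
       \<and> card {u. u < t \<and> orbit_weight q \<alpha> L t u = 1} = q - 1
       \<and> card {u. u < t \<and> orbit_weight q \<alpha> L t u = 2} = 1"
proof -
  have "2 \<le> p"
    using assms(1) prime_ge_2_nat by blast
  also have "p \<le> q"
    using assms(2,3) prime_gt_0_nat[OF assms(1)] by (simp add: self_le_power)
  finally have "q \<ge> 2" .
  interpret cubic_extension q \<alpha>
  proof
    show "(x + y) ^ q = x ^ q + y ^ q" for x y :: 'a
      using assms(1-4) by (intro finite_field_power_add_char_power[of p "h * 3"]) (simp_all add: power_mult)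
  qed (use assms(4,5) \<open>q \<ge> 2\<close> in simp_all)
  interpret cubic_extension_3 q \<alpha>
    by unfold_locales (use assms(8) in \<open>simp add: N_def\<close>)
  have t: "t = cubic_extension_3.t q" "3 * t = q^2 + q + 1"
    using assms(9) N_eq by (simp_all add: t_def N_def)
  note counts = orbit_weight_counts[OF assms(6), folded t(1)]
  have "3 * int (card {u. u < t \<and> orbit_weight q \<alpha> L t u = 0}) + 3 * int q = int q ^ 2 + int q + 1"
    using counts(4) arg_cong[OF t(2), of int] by simp
  thus ?thesis
    using counts by simp
qed

end
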